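(* Let $m,n$ be natural numbers with $\gcd(m,n)=1$. Then the lattice $\mathcal{J}_{mn}$ is isomorphic to the direct product of lattices $\mathcal{J}_m\times\mathcal{J}_n$.
   Context: For a natural number $k$, $\mathbb{Z}_k=\{0,\dots,k-1\}$. $P(\mathbb{Z}_k,+)$ denotes the clone of all polynomial operations of the group $(\mathbb{Z}_k,+)$ (operations of the form $a_0+a_1x_1+\dots+a_sx_s$), and $P(\mathbb{Z}_k,+,\cdot)$ denotes the clone of all polynomial operations of the ring $(\mathbb{Z}_k,+,\cdot)$. $\mathcal{J}_k$ denotes the interval $[P(\mathbb{Z}_k,+),P(\mathbb{Z}_k,+,\cdot)]$ in the lattice of all clones on the set $\mathbb{Z}_k$, i.e. the lattice of all clones $C$ with $P(\mathbb{Z}_k,+)\subseteq C\subseteq P(\mathbb{Z}_k,+,\cdot)$. *)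

theory Defs
  imports Main
begin

text \<open>An n-ary operation is encoded as a pair (n, f)
  with f :: nat list => nat; f is only meaningful on argument lists of length n with entries
  in Z_k, and is normalised to 0 outside this domain so that equality of operations is
  extensional equality on Z_k^n. Arities are positive (standard convention for clones).\<close>

definition valid_args :: "nat \<Rightarrow> nat \<Rightarrow> nat list \<Rightarrow> bool" where
  "valid_args k n xs \<longleftrightarrow> length xs = n \<and> set xs \<subseteq> {..<k}"

definition ops :: "nat \<Rightarrow> nat \<Rightarrow> (nat list \<Rightarrow> nat) set" where
  "ops k n = {f. (\<forall>xs. valid_args k n xs \<longrightarrow> f xs < k) \<and>
                 (\<forall>xs. \<not> valid_args k n xs \<longrightarrow> f xs = 0)}"

definition all_ops :: "nat \<Rightarrow> (nat \<times> (nat list \<Rightarrow> nat)) set" where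
  "all_ops k = {(n, f). 0 < n \<and> f \<in> ops k n}"

definition mk_op :: "nat \<Rightarrow> nat \<Rightarrow> (nat list \<Rightarrow> nat) \<Rightarrow> nat \<times> (nat list \<Rightarrow> nat)" where
  "mk_op k n g = (n, \<lambda>xs. if valid_args k n xs then g xs else 0)"

definition proj_op :: "nat \<Rightarrow> nat \<Rightarrow> nat \<Rightarrow> nat \<times> (nat list \<Rightarrow> nat)" where
  "proj_op k n i = mk_op k n (\<lambda>xs. xs ! i)"

definition is_clone :: "nat \<Rightarrow> (nat \<times> (nat list \<Rightarrow> nat)) set \<Rightarrow> bool" where
  "is_clone k C \<longleftrightarrow> C \<subseteq> all_ops k \<and>
     (\<forall>n i. 0 < n \<and> i < n \<longrightarrow> proj_op k n i \<in> C) \<and>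
     (\<forall>m f n gs. (m, f) \<in> C \<and> length gs = m \<and> 0 < n \<and> (\<forall>g\<in>set gs. (n, g) \<in> C)
         \<longrightarrow> mk_op k n (\<lambda>xs. f (map (\<lambda>g. g xs) gs)) \<in> C)"

definition clone_gen :: "nat \<Rightarrow> (nat \<times> (nat list \<Rightarrow> nat)) set \<Rightarrow> (nat \<times> (nat list \<Rightarrow> nat)) set" where
  "clone_gen k F = \<Inter> {C. is_clone k C \<and> F \<subseteq> C}"

definition add_op :: "nat \<Rightarrow> nat \<times> (nat list \<Rightarrow> nat)" where
  "add_op k = mk_op k 2 (\<lambda>xs. (xs ! 0 + xs ! 1) mod k)"

definition mult_op :: "nat \<Rightarrow> nat \<times> (nat list \<Rightarrow> nat)" where
  "mult_op k = mk_op k 2 (\<lambda>xs. (xs ! 0 * xs ! 1) mod k)"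

definition const_ops :: "nat \<Rightarrow> (nat \<times> (nat list \<Rightarrow> nat)) set" where
  "const_ops k = {mk_op k 1 (\<lambda>_. a) | a. a < k}"

definition P_group :: "nat \<Rightarrow> (nat \<times> (nat list \<Rightarrow> nat)) set" where
  "P_group k = {mk_op k n (\<lambda>xs. (a0 + (\<Sum>i<n. a i * xs ! i)) mod k) | n a0 a. 0 < n}"

definition P_ring :: "nat \<Rightarrow> (nat \<times> (nat list \<Rightarrow> nat)) set" where
  "P_ring k = clone_gen k ({add_op k, mult_op k} \<union> const_ops k)"

definition J :: "nat \<Rightarrow> (nat \<times> (nat list \<Rightarrow> nat)) set set" where
  "J k = {C. is_clone k C \<and> P_group k \<subseteq> C \<and> C \<subseteq> P_ring k}"

end

theory Submission
  imports Defs "HOL-Number_Theory.Cong"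
begin

text \<open>Every polynomial operation of the ring Z_mn preserves congruence modulo m and modulo n, so
  reducing values modulo m turns a clone C of the interval J_mn into a clone of J_m, and likewise
  for n. The isomorphism is C \<mapsto> (C mod m, C mod n); its inverse sends (C1, C2) to the
  polynomial operations whose reductions lie in C1 and C2. Both facts rest on the Chinese remainder
  idempotents e1 = (1, 0) and e2 = (0, 1): the linear operation e1 x + e2 y lies in every clone
  above P(Z_mn, +), so C contains an operation h as soon as it contains some h1 congruent to h
  modulo m and some h2 congruent to h modulo n, namely as e1 h1 + e2 h2; and e1 h lifts a given
  operation modulo m while vanishing modulo n.\<close>

type_synonym operation = "nat \<times> (nat list \<Rightarrow> nat)"

lemma valid_args_mono: "valid_args m a xs \<Longrightarrow> m \<le> k \<Longrightarrow> valid_args k a xs"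
  unfolding valid_args_def by auto

lemma valid_args_nth_less: "valid_args k a xs \<Longrightarrow> i < a \<Longrightarrow> xs ! i < k"
  unfolding valid_args_def by (auto simp: subset_iff)

lemma valid_args_modulus_pos: "valid_args k a xs \<Longrightarrow> 0 < a \<Longrightarrow> 0 < k"
  unfolding valid_args_def by (cases xs) auto

lemma valid_args_map_mod: "valid_args k a xs \<Longrightarrow> valid_args k a (map (\<lambda>x. x mod m) xs)"
  unfolding valid_args_def by (auto intro: le_less_trans[OF mod_less_eq_dividend])

lemma valid_args_map_mod_less: "0 < m \<Longrightarrow> length xs = a \<Longrightarrow> valid_args m a (map (\<lambda>x. x mod m) xs)"
  unfolding valid_args_def by auto

lemma mk_op_cong: "(\<And>xs. valid_args k a xs \<Longrightarrow> g xs = g' xs) \<Longrightarrow> mk_op k a g = mk_op k a g'"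
  unfolding mk_op_def by auto

lemma fst_mk_op [simp]: "fst (mk_op k a g) = a"
  by (simp add: mk_op_def)

lemma snd_mk_op: "valid_args k a xs \<Longrightarrow> snd (mk_op k a g) xs = g xs"
  by (simp add: mk_op_def)

lemma pair_snd_mk_op [simp]: "(a, snd (mk_op k a g)) = mk_op k a g"
  by (metis fst_mk_op prod.collapse)

lemma mk_op_fst_snd: "h \<in> all_ops k \<Longrightarrow> mk_op k (fst h) (snd h) = h"
  unfolding all_ops_def ops_def mk_op_def by (cases h) auto

lemma mk_op_in_all_ops:
  "0 < a \<Longrightarrow> (\<And>xs. valid_args k a xs \<Longrightarrow> g xs < k) \<Longrightarrow> mk_op k a g \<in> all_ops k"
  unfolding all_ops_def ops_def mk_op_def by auto

lemma all_ops_less: "(a, f) \<in> all_ops k \<Longrightarrow> valid_args k a xs \<Longrightarrow> f xs < k"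
  unfolding all_ops_def ops_def by auto

lemma all_ops_arity_pos: "h \<in> all_ops k \<Longrightarrow> 0 < fst h"
  unfolding all_ops_def by auto

lemma clone_subset_all_ops: "is_clone k C \<Longrightarrow> C \<subseteq> all_ops k"
  unfolding is_clone_def by blast

lemma clone_proj: "is_clone k C \<Longrightarrow> i < a \<Longrightarrow> mk_op k a (\<lambda>xs. xs ! i) \<in> C"
  unfolding is_clone_def proj_op_def by auto

lemma clone_comp:
  "is_clone k C \<Longrightarrow> (r, f) \<in> C \<Longrightarrow> length gs = r \<Longrightarrow> 0 < a \<Longrightarrow> \<forall>g\<in>set gs. (a, g) \<in> C \<Longrightarrow>
    mk_op k a (\<lambda>xs. f (map (\<lambda>g. g xs) gs)) \<in> C"
  unfolding is_clone_def by blast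

lemma clone_comp_mk_op:
  assumes C: "is_clone k C" and F: "mk_op k r F \<in> C" and len: "length Gs = r" and a: "0 < a"
    and Gs: "\<forall>G\<in>set Gs. mk_op k a G \<in> C"
    and less: "\<forall>G\<in>set Gs. \<forall>xs. valid_args k a xs \<longrightarrow> G xs < k"
  shows "mk_op k a (\<lambda>xs. F (map (\<lambda>G. G xs) Gs)) \<in> C"
proof -
  let ?gs = "map (\<lambda>G. snd (mk_op k a G)) Gs"
  have "mk_op k a (\<lambda>xs. snd (mk_op k r F) (map (\<lambda>g. g xs) ?gs)) \<in> C"
    using clone_comp[OF C _ _ a, of r "snd (mk_op k r F)" ?gs] F Gs len by auto
  also have "mk_op k a (\<lambda>xs. snd (mk_op k r F) (map (\<lambda>g. g xs) ?gs)) =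
      mk_op k a (\<lambda>xs. F (map (\<lambda>G. G xs) Gs))"
  proof (rule mk_op_cong)
    fix xs assume xs: "valid_args k a xs"
    then have args: "map (\<lambda>g. g xs) ?gs = map (\<lambda>G. G xs) Gs"
      by (simp add: snd_mk_op)
    have "valid_args k r (map (\<lambda>G. G xs) Gs)"
      using less xs len unfolding valid_args_def by auto
    then show "snd (mk_op k r F) (map (\<lambda>g. g xs) ?gs) = F (map (\<lambda>G. G xs) Gs)"
      unfolding args by (rule snd_mk_op)
  qed
  finally show ?thesis .
qed

lemma is_clone_all_ops: "is_clone k (all_ops k)"
  unfolding is_clone_def
proof (intro conjI allI impI)
  fix n i :: nat assume "0 < n \<and> i < n"
  then show "proj_op k n i \<in> all_ops k"
    unfolding proj_op_def by (auto intro!: mk_op_in_all_ops simp: valid_args_nth_less)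
next
  fix r f n gs
  assume a: "(r, f) \<in> all_ops k \<and> length gs = r \<and> 0 < n \<and> (\<forall>g\<in>set gs. (n, g) \<in> all_ops k)"
  show "mk_op k n (\<lambda>xs. f (map (\<lambda>g. g xs) gs)) \<in> all_ops k"
  proof (rule mk_op_in_all_ops)
    fix xs assume "valid_args k n xs"
    then have "valid_args k r (map (\<lambda>g. g xs) gs)"
      using a all_ops_less unfolding valid_args_def by fastforce
    then show "f (map (\<lambda>g. g xs) gs) < k" using a all_ops_less by blast
  qed (use a in simp)
qed simp

lemma clone_Int: "is_clone k A \<Longrightarrow> is_clone k B \<Longrightarrow> is_clone k (A \<inter> B)"
  unfolding is_clone_def by (simp add: le_infI1)

lemma clone_gen_is_clone:
  assumes "F \<subseteq> all_ops k" shows "is_clone k (clone_gen k F)"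
  using assms is_clone_all_ops unfolding clone_gen_def is_clone_def by (simp add: Inter_lower)

lemma clone_gen_least: "is_clone k S \<Longrightarrow> F \<subseteq> S \<Longrightarrow> clone_gen k F \<subseteq> S"
  unfolding clone_gen_def by auto

lemma clone_gen_generators: "F \<subseteq> clone_gen k F"
  unfolding clone_gen_def by auto

lemma P_groupI: "0 < a \<Longrightarrow> mk_op k a (\<lambda>xs. (a0 + (\<Sum>i<a. c i * xs ! i)) mod k) \<in> P_group k"
  unfolding P_group_def by blast

lemma P_groupE:
  assumes "h \<in> P_group k"
  obtains a a0 c where "0 < a" "h = mk_op k a (\<lambda>xs. (a0 + (\<Sum>i<a. c i * xs ! i)) mod k)"
  using assms unfolding P_group_def by blast

lemma zero_op_P_group: "0 < a \<Longrightarrow> mk_op k a (\<lambda>_. 0) \<in> P_group k"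
  using P_groupI[of a k 0 "\<lambda>_. 0"] by simp

lemma binary_lin_op_P_group: "mk_op k 2 (\<lambda>ys. (c * ys ! 0 + d * ys ! 1) mod k) \<in> P_group k"
  using P_groupI[of 2 k 0 "\<lambda>i. if i = 0 then c else d"] by (simp add: numeral_2_eq_2)

lemma ring_generators_all_ops: "{add_op k, mult_op k} \<union> const_ops k \<subseteq> all_ops k"
  unfolding add_op_def mult_op_def const_ops_def
  by (auto intro!: mk_op_in_all_ops dest: valid_args_modulus_pos)

lemma is_clone_P_ring: "is_clone k (P_ring k)"
  unfolding P_ring_def by (rule clone_gen_is_clone[OF ring_generators_all_ops])

lemma add_op_P_ring: "add_op k \<in> P_ring k"
  and mult_op_P_ring: "mult_op k \<in> P_ring k"
  and const_ops_P_ring: "const_ops k \<subseteq> P_ring k"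
  using clone_gen_generators[of "{add_op k, mult_op k} \<union> const_ops k" k]
  unfolding P_ring_def by auto

lemma P_ring_least:
  "is_clone k S \<Longrightarrow> add_op k \<in> S \<Longrightarrow> mult_op k \<in> S \<Longrightarrow> const_ops k \<subseteq> S \<Longrightarrow> P_ring k \<subseteq> S"
  unfolding P_ring_def by (rule clone_gen_least) auto

lemma const_op_P_ring:
  assumes "b < k" "0 < a" shows "mk_op k a (\<lambda>_. b) \<in> P_ring k"
proof -
  have "mk_op k 1 (\<lambda>_. b) \<in> P_ring k"
    using const_ops_P_ring assms(1) unfolding const_ops_def by auto
  from clone_comp_mk_op[OF is_clone_P_ring[of k] this _ assms(2), of "[\<lambda>xs. xs ! 0]"]
  show ?thesis
    using clone_proj[OF is_clone_P_ring assms(2)] valid_args_nth_less assms(2) by simp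
qed

lemma partial_lin_op_P_ring:
  assumes k: "0 < k" and a: "0 < a"
  shows "j \<le> a \<Longrightarrow> mk_op k a (\<lambda>xs. (a0 + (\<Sum>i<j. c i * xs ! i)) mod k) \<in> P_ring k"
proof (induction j)
  case 0
  show ?case using const_op_P_ring[of "a0 mod k" k a] k a by simp
next
  case (Suc j)
  then have j: "j < a" by simp
  let ?s = "\<lambda>xs. a0 + (\<Sum>i<j. c i * xs ! i)"
  have "mk_op k a (\<lambda>xs. (c j mod k * xs ! j) mod k) \<in> P_ring k"
    using clone_comp_mk_op[OF is_clone_P_ring[of k] mult_op_P_ring[unfolded mult_op_def] _ a,
        of "[\<lambda>_. c j mod k, \<lambda>xs. xs ! j]"]
      const_op_P_ring[of "c j mod k" k a] clone_proj[OF is_clone_P_ring j]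
      valid_args_nth_less[OF _ j] k a by simp
  then have "mk_op k a (\<lambda>xs. ((?s xs) mod k + (c j mod k * xs ! j) mod k) mod k) \<in> P_ring k"
    using clone_comp_mk_op[OF is_clone_P_ring[of k] add_op_P_ring[unfolded add_op_def] _ a,
        of "[\<lambda>xs. ?s xs mod k, \<lambda>xs. (c j mod k * xs ! j) mod k]"]
      Suc k by simp
  then show ?case
    by (simp add: mod_add_eq mod_mult_left_eq add.assoc)
qed

lemma P_group_subset_P_ring: "0 < k \<Longrightarrow> P_group k \<subseteq> P_ring k"
  by (auto elim!: P_groupE intro: partial_lin_op_P_ring)

definition preserves_mod :: "nat \<Rightarrow> nat \<Rightarrow> operation \<Rightarrow> bool" where
  "preserves_mod k m h \<longleftrightarrow> (\<forall>xs ys. valid_args k (fst h) xs \<longrightarrow> valid_args k (fst h) ys \<longrightarrow>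
      map (\<lambda>x. x mod m) xs = map (\<lambda>x. x mod m) ys \<longrightarrow> snd h xs mod m = snd h ys mod m)"

lemma preserves_modD:
  "preserves_mod k m (a, g) \<Longrightarrow> valid_args k a xs \<Longrightarrow> valid_args k a ys \<Longrightarrow>
    map (\<lambda>x. x mod m) xs = map (\<lambda>x. x mod m) ys \<Longrightarrow> g xs mod m = g ys mod m"
  unfolding preserves_mod_def fst_conv snd_conv by blast

lemma preserves_mod_mk_op:
  assumes "\<And>xs ys. valid_args k a xs \<Longrightarrow> valid_args k a ys \<Longrightarrow>
    map (\<lambda>x. x mod m) xs = map (\<lambda>x. x mod m) ys \<Longrightarrow> g xs mod m = g ys mod m"
  shows "preserves_mod k m (mk_op k a g)"
  unfolding preserves_mod_def fst_mk_op
proof (intro allI impI)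
  fix xs ys assume xs: "valid_args k a xs" and ys: "valid_args k a ys"
    and eq: "map (\<lambda>x. x mod m) xs = map (\<lambda>x. x mod m) ys"
  show "snd (mk_op k a g) xs mod m = snd (mk_op k a g) ys mod m"
    unfolding snd_mk_op[OF xs] snd_mk_op[OF ys] by (rule assms[OF xs ys eq])
qed

lemma preserves_mod_mod_eq:
  assumes "preserves_mod k m h" and "valid_args k (fst h) xs"
  shows "snd h xs mod m = snd h (map (\<lambda>x. x mod m) xs) mod m"
proof -
  have "map (\<lambda>x. x mod m) xs = map (\<lambda>x. x mod m) (map (\<lambda>x. x mod m) xs)"
    by simp
  then show ?thesis
    using assms valid_args_map_mod[OF assms(2)] unfolding preserves_mod_def by blast
qed

lemma map_mod_eq_nth:
  "map (\<lambda>x. x mod m) xs = map (\<lambda>x. x mod m) ys \<Longrightarrow> i < length xs \<Longrightarrow> xs ! i mod m = ys ! i mod m"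
  by (metis length_map nth_map)

lemma preserves_mod_binary_op:
  assumes m: "m dvd k"
    and F: "\<And>x y x' y'. x mod m = x' mod m \<Longrightarrow> y mod m = y' mod m \<Longrightarrow> F x y mod m = F x' y' mod m"
  shows "preserves_mod k m (mk_op k 2 (\<lambda>xs. F (xs ! 0) (xs ! 1) mod k))"
proof (rule preserves_mod_mk_op)
  fix xs ys assume "valid_args k 2 xs" and eq: "map (\<lambda>x. x mod m) xs = map (\<lambda>x. x mod m) ys"
  then have "length xs = 2"
    unfolding valid_args_def by simp
  then have "xs ! 0 mod m = ys ! 0 mod m" "xs ! 1 mod m = ys ! 1 mod m"
    using map_mod_eq_nth[OF eq] by simp_all
  then have "F (xs ! 0) (xs ! 1) mod m = F (ys ! 0) (ys ! 1) mod m"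
    by (rule F)
  then show "F (xs ! 0) (xs ! 1) mod k mod m = F (ys ! 0) (ys ! 1) mod k mod m"
    by (simp add: mod_mod_cancel[OF m])
qed

lemma is_clone_preserves_mod: "is_clone k {h \<in> all_ops k. preserves_mod k m h}"
  unfolding is_clone_def
proof (intro conjI allI impI)
  fix n i :: nat assume ni: "0 < n \<and> i < n"
  have "preserves_mod k m (proj_op k n i)"
    unfolding proj_op_def
  proof (rule preserves_mod_mk_op)
    fix xs ys assume "valid_args k n xs" and eq: "map (\<lambda>x. x mod m) xs = map (\<lambda>x. x mod m) ys"
    then show "xs ! i mod m = ys ! i mod m"
      using ni map_mod_eq_nth[OF eq] unfolding valid_args_def by simp
  qed
  then show "proj_op k n i \<in> {h \<in> all_ops k. preserves_mod k m h}"
    using is_clone_all_ops ni unfolding is_clone_def by blast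
next
  fix r f a gs
  assume A: "(r, f) \<in> {h \<in> all_ops k. preserves_mod k m h} \<and> length gs = r \<and> 0 < a \<and>
    (\<forall>g\<in>set gs. (a, g) \<in> {h \<in> all_ops k. preserves_mod k m h})"
  have "preserves_mod k m (mk_op k a (\<lambda>xs. f (map (\<lambda>g. g xs) gs)))"
  proof (rule preserves_mod_mk_op)
    fix xs ys assume xs: "valid_args k a xs" and ys: "valid_args k a ys"
      and eq: "map (\<lambda>x. x mod m) xs = map (\<lambda>x. x mod m) ys"
    have "\<forall>g\<in>set gs. g xs < k \<and> g ys < k"
      using A xs ys all_ops_less by blast
    then have args: "valid_args k r (map (\<lambda>g. g xs) gs)" "valid_args k r (map (\<lambda>g. g ys) gs)"
      using A unfolding valid_args_def by auto
    have "g xs mod m = g ys mod m" if "g \<in> set gs" for g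
      using A that by (blast intro: preserves_modD[OF _ xs ys eq])
    then have "map (\<lambda>x. x mod m) (map (\<lambda>g. g xs) gs) = map (\<lambda>x. x mod m) (map (\<lambda>g. g ys) gs)"
      by simp
    moreover have "preserves_mod k m (r, f)"
      using A by blast
    ultimately show "f (map (\<lambda>g. g xs) gs) mod m = f (map (\<lambda>g. g ys) gs) mod m"
      using preserves_modD[OF _ args] by blast
  qed
  then show "mk_op k a (\<lambda>xs. f (map (\<lambda>g. g xs) gs)) \<in> {h \<in> all_ops k. preserves_mod k m h}"
    using A clone_comp[OF is_clone_all_ops] by blast
qed (rule Collect_subset)

lemma P_ring_preserves_mod:
  assumes "m dvd k" and "h \<in> P_ring k" shows "preserves_mod k m h"
proof -
  have "preserves_mod k m (add_op k)"
    unfolding add_op_def by (rule preserves_mod_binary_op[OF assms(1)]) (rule mod_add_cong)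
  moreover have "preserves_mod k m (mult_op k)"
    unfolding mult_op_def by (rule preserves_mod_binary_op[OF assms(1)]) (rule mod_mult_cong)
  moreover have "preserves_mod k m (mk_op k 1 (\<lambda>_. b))" for b
    by (rule preserves_mod_mk_op) (rule refl)
  ultimately have "add_op k \<in> {h \<in> all_ops k. preserves_mod k m h}"
    "mult_op k \<in> {h \<in> all_ops k. preserves_mod k m h}"
    "const_ops k \<subseteq> {h \<in> all_ops k. preserves_mod k m h}"
    using ring_generators_all_ops unfolding const_ops_def by blast+
  then show ?thesis
    using P_ring_least[OF is_clone_preserves_mod] assms(2) by blast
qed

text \<open>For m dividing k, the operation induced on Z_m by an operation on Z_k that preserves
  congruence modulo m.\<close>

definition reduce_op :: "nat \<Rightarrow> operation \<Rightarrow> operation" where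
  "reduce_op m h = mk_op m (fst h) (\<lambda>xs. snd h xs mod m)"

lemma fst_reduce_op [simp]: "fst (reduce_op m h) = fst h"
  by (simp add: reduce_op_def)

lemma pair_snd_reduce_op [simp]: "(a, snd (reduce_op m (a, g))) = reduce_op m (a, g)"
  by (simp add: reduce_op_def)

lemma reduce_op_mk_op: "m \<le> k \<Longrightarrow> reduce_op m (mk_op k a g) = mk_op m a (\<lambda>xs. g xs mod m)"
  unfolding reduce_op_def fst_mk_op by (rule mk_op_cong) (simp add: snd_mk_op valid_args_mono)

lemma reduce_op_in_all_ops: "0 < m \<Longrightarrow> h \<in> all_ops k \<Longrightarrow> reduce_op m h \<in> all_ops m"
  unfolding reduce_op_def by (auto intro!: mk_op_in_all_ops all_ops_arity_pos)

lemma reduce_op_proj: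
  "m \<le> k \<Longrightarrow> i < a \<Longrightarrow> reduce_op m (mk_op k a (\<lambda>xs. xs ! i)) = mk_op m a (\<lambda>xs. xs ! i)"
  by (auto simp: reduce_op_mk_op valid_args_nth_less intro: mk_op_cong)

lemma reduce_op_eq_imp_cong:
  assumes m: "0 < m" "m \<le> k" and f: "preserves_mod k m (a, f)" and g: "preserves_mod k m (a, g)"
    and eq: "reduce_op m (a, f) = reduce_op m (a, g)" and xs: "valid_args k a xs"
  shows "[f xs = g xs] (mod m)"
proof -
  let ?ys = "map (\<lambda>x. x mod m) xs"
  have "valid_args m a ?ys"
    using valid_args_map_mod_less[OF m(1)] xs unfolding valid_args_def by simp
  then have "f ?ys mod m = g ?ys mod m"
    using arg_cong[OF eq, of "\<lambda>h. snd h ?ys"] by (simp add: reduce_op_def snd_mk_op)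
  then show ?thesis
    using preserves_mod_mod_eq[OF f] preserves_mod_mod_eq[OF g] xs unfolding cong_def by simp
qed

lemma reduce_op_comp:
  assumes m: "0 < m" "m \<le> k" and F: "preserves_mod k m (r, F)" and len: "length Gs = r"
    and Gs: "\<forall>G\<in>set Gs. (a, G) \<in> all_ops k"
    and f: "reduce_op m (r, F) = (r, f)" and gs: "map (\<lambda>G. snd (reduce_op m (a, G))) Gs = gs"
  shows "reduce_op m (mk_op k a (\<lambda>xs. F (map (\<lambda>G. G xs) Gs))) = mk_op m a (\<lambda>xs. f (map (\<lambda>g. g xs) gs))"
  unfolding reduce_op_mk_op[OF m(2)]
proof (rule mk_op_cong)
  fix xs assume xs: "valid_args m a xs"
  let ?us = "map (\<lambda>G. G xs) Gs" and ?vs = "map (\<lambda>G. G xs mod m) Gs"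
  have vs: "map (\<lambda>g. g xs) gs = ?vs"
    using xs unfolding gs[symmetric] by (simp add: reduce_op_def snd_mk_op)
  have "valid_args m r ?vs"
    using valid_args_map_mod_less[OF m(1), of ?us] len by (simp add: comp_def)
  then have f_vs: "f ?vs = F ?vs mod m"
    using arg_cong[OF f, of "\<lambda>h. snd h ?vs"] by (simp add: reduce_op_def snd_mk_op)
  have "\<forall>G\<in>set Gs. G xs < k"
    using Gs all_ops_less valid_args_mono[OF xs m(2)] by blast
  then have "valid_args k r ?us"
    using len unfolding valid_args_def by auto
  then show "F ?us mod m = f (map (\<lambda>g. g xs) gs)"
    unfolding vs f_vs using preserves_mod_mod_eq[OF F] by (simp add: comp_def)
qed

lemma reduce_op_image_pairE:
  assumes "(a, g) \<in> reduce_op m ` C"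
  obtains G where "(a, G) \<in> C" "reduce_op m (a, G) = (a, g)"
proof -
  obtain H where H: "H \<in> C" "reduce_op m H = (a, g)"
    using assms by (metis imageE)
  then have "H = (a, snd H)"
    by (metis fst_conv fst_reduce_op prod.collapse)
  then show thesis
    using H that by metis
qed

lemma reduce_op_image_lift_list:
  assumes "\<forall>g\<in>set gs. (a, g) \<in> reduce_op m ` C"
  obtains Gs where "length Gs = length gs" "\<forall>G\<in>set Gs. (a, G) \<in> C"
    "map (\<lambda>G. snd (reduce_op m (a, G))) Gs = gs"
proof -
  have "\<exists>G. (a, G) \<in> C \<and> reduce_op m (a, G) = (a, g)" if "g \<in> set gs" for g
  proof -
    from assms that have "(a, g) \<in> reduce_op m ` C" by blast
    then show ?thesis by (rule reduce_op_image_pairE) blast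
  qed
  then obtain lift where lift: "\<forall>g\<in>set gs. (a, lift g) \<in> C \<and> reduce_op m (a, lift g) = (a, g)"
    by (metis bchoice)
  then have "map (\<lambda>G. snd (reduce_op m (a, G))) (map lift gs) = gs"
    by (simp add: map_idI)
  with lift show thesis
    using that[of "map lift gs"] by simp
qed

lemma reduce_op_image_is_clone:
  assumes m: "0 < m" "m \<le> k" and C: "is_clone k C" and pres: "\<forall>h\<in>C. preserves_mod k m h"
  shows "is_clone m (reduce_op m ` C)"
  unfolding is_clone_def
proof (intro conjI allI impI)
  show "reduce_op m ` C \<subseteq> all_ops m"
    using reduce_op_in_all_ops[OF m(1)] clone_subset_all_ops[OF C] by blast
next
  fix n i :: nat assume "0 < n \<and> i < n"
  then have i: "i < n" by simp
  show "proj_op m n i \<in> reduce_op m ` C"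
    unfolding proj_op_def
    using reduce_op_proj[OF m(2) i, symmetric] clone_proj[OF C i] by (rule image_eqI)
next
  fix r f a gs
  assume A: "(r, f) \<in> reduce_op m ` C \<and> length gs = r \<and> 0 < a \<and>
    (\<forall>g\<in>set gs. (a, g) \<in> reduce_op m ` C)"
  from A have "(r, f) \<in> reduce_op m ` C" by simp
  then obtain F where F: "(r, F) \<in> C" "reduce_op m (r, F) = (r, f)"
    by (rule reduce_op_image_pairE)
  from A have "\<forall>g\<in>set gs. (a, g) \<in> reduce_op m ` C" by simp
  then obtain Gs where Gs: "length Gs = length gs" "\<forall>G\<in>set Gs. (a, G) \<in> C"
      "map (\<lambda>G. snd (reduce_op m (a, G))) Gs = gs"
    by (rule reduce_op_image_lift_list)
  have len: "length Gs = r"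
    using A Gs(1) by simp
  have comp_in: "mk_op k a (\<lambda>xs. F (map (\<lambda>G. G xs) Gs)) \<in> C"
    using clone_comp[OF C F(1) len] A Gs(2) by blast
  have comp_red: "reduce_op m (mk_op k a (\<lambda>xs. F (map (\<lambda>G. G xs) Gs))) =
      mk_op m a (\<lambda>xs. f (map (\<lambda>g. g xs) gs))"
    using reduce_op_comp[OF m _ len _ F(2) Gs(3)] pres F(1) Gs(2) clone_subset_all_ops[OF C] by blast
  show "mk_op m a (\<lambda>xs. f (map (\<lambda>g. g xs) gs)) \<in> reduce_op m ` C"
    using comp_red[symmetric] comp_in by (rule image_eqI)
qed

lemma reduce_op_preimage_is_clone:
  assumes m: "0 < m" "m \<le> k" and S: "is_clone k S" and pres: "\<forall>h\<in>S. preserves_mod k m h"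
    and C: "is_clone m C"
  shows "is_clone k {h \<in> S. reduce_op m h \<in> C}"
  unfolding is_clone_def
proof (intro conjI allI impI)
  show "{h \<in> S. reduce_op m h \<in> C} \<subseteq> all_ops k"
    using clone_subset_all_ops[OF S] by blast
next
  fix n i :: nat assume "0 < n \<and> i < n"
  then show "proj_op k n i \<in> {h \<in> S. reduce_op m h \<in> C}"
    unfolding proj_op_def using clone_proj[OF S] clone_proj[OF C] reduce_op_proj[OF m(2)] by simp
next
  fix r f a gs
  assume A: "(r, f) \<in> {h \<in> S. reduce_op m h \<in> C} \<and> length gs = r \<and> 0 < a \<and>
    (\<forall>g\<in>set gs. (a, g) \<in> {h \<in> S. reduce_op m h \<in> C})"
  let ?f = "snd (reduce_op m (r, f))" and ?gs = "map (\<lambda>g. snd (reduce_op m (a, g))) gs"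
  have "mk_op k a (\<lambda>xs. f (map (\<lambda>g. g xs) gs)) \<in> S"
    using clone_comp[OF S] A by blast
  moreover have "mk_op m a (\<lambda>xs. ?f (map (\<lambda>g. g xs) ?gs)) \<in> C"
    using clone_comp[OF C, of r ?f ?gs a] A by auto
  moreover have "reduce_op m (mk_op k a (\<lambda>xs. f (map (\<lambda>g. g xs) gs))) =
      mk_op m a (\<lambda>xs. ?f (map (\<lambda>g. g xs) ?gs))"
    using reduce_op_comp[OF m, of r f gs a ?f ?gs] pres A clone_subset_all_ops[OF S] by auto
  ultimately show "mk_op k a (\<lambda>xs. f (map (\<lambda>g. g xs) gs)) \<in> {h \<in> S. reduce_op m h \<in> C}"
    by simp
qed

lemma reduce_op_add_op: "m dvd k \<Longrightarrow> m \<le> k \<Longrightarrow> reduce_op m (add_op k) = add_op m"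
  unfolding add_op_def by (simp add: reduce_op_mk_op mod_mod_cancel)

lemma reduce_op_mult_op: "m dvd k \<Longrightarrow> m \<le> k \<Longrightarrow> reduce_op m (mult_op k) = mult_op m"
  unfolding mult_op_def by (simp add: reduce_op_mk_op mod_mod_cancel)

lemma reduce_op_P_ring:
  assumes k: "0 < k" and mk: "m dvd k"
  shows "reduce_op m ` P_ring k = P_ring m"
proof
  have m: "0 < m" "m \<le> k"
    using dvd_pos_nat[OF k mk] dvd_imp_le[OF mk k] .
  have pres: "\<forall>h\<in>P_ring k. preserves_mod k m h"
    using P_ring_preserves_mod[OF mk] by blast
  have "P_ring k \<subseteq> {h \<in> P_ring k. reduce_op m h \<in> P_ring m}"
  proof (rule P_ring_least[OF reduce_op_preimage_is_clone[OF m is_clone_P_ring pres is_clone_P_ring]])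
    have "reduce_op m (mk_op k 1 (\<lambda>_. b)) \<in> P_ring m" for b
      using const_op_P_ring[of "b mod m" m 1] m by (simp add: reduce_op_mk_op)
    then show "const_ops k \<subseteq> {h \<in> P_ring k. reduce_op m h \<in> P_ring m}"
      using const_ops_P_ring unfolding const_ops_def by blast
  qed (simp_all add: add_op_P_ring mult_op_P_ring reduce_op_add_op reduce_op_mult_op mk m)
  then show "reduce_op m ` P_ring k \<subseteq> P_ring m"
    by blast
  show "P_ring m \<subseteq> reduce_op m ` P_ring k"
  proof (rule P_ring_least[OF reduce_op_image_is_clone[OF m is_clone_P_ring pres]])
    show "add_op m \<in> reduce_op m ` P_ring k"
      using reduce_op_add_op[OF mk m(2), symmetric] add_op_P_ring by (rule image_eqI)
    show "mult_op m \<in> reduce_op m ` P_ring k"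
      using reduce_op_mult_op[OF mk m(2), symmetric] mult_op_P_ring by (rule image_eqI)
    have "mk_op m 1 (\<lambda>_. b) = reduce_op m (mk_op k 1 (\<lambda>_. b))" if "b < m" for b
      using that m(2) by (simp add: reduce_op_mk_op)
    moreover have "mk_op k 1 (\<lambda>_. b) \<in> P_ring k" if "b < m" for b
      using that m(2) by (intro const_op_P_ring) auto
    ultimately show "const_ops m \<subseteq> reduce_op m ` P_ring k"
      unfolding const_ops_def by blast
  qed
qed

lemma reduce_op_lin_op:
  "m dvd k \<Longrightarrow> m \<le> k \<Longrightarrow> reduce_op m (mk_op k a (\<lambda>xs. (a0 + (\<Sum>i<a. c i * xs ! i)) mod k)) =
    mk_op m a (\<lambda>xs. (a0 + (\<Sum>i<a. c i * xs ! i)) mod m)"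
  by (simp add: reduce_op_mk_op mod_mod_cancel)

lemma reduce_op_P_group:
  assumes "m dvd k" "m \<le> k"
  shows "reduce_op m ` P_group k = P_group m"
proof
  show "reduce_op m ` P_group k \<subseteq> P_group m"
    by (auto elim!: P_groupE simp: reduce_op_lin_op[OF assms] intro: P_groupI)
  show "P_group m \<subseteq> reduce_op m ` P_group k"
  proof
    fix h assume "h \<in> P_group m"
    then obtain a a0 c where a: "0 < a" and h: "h = mk_op m a (\<lambda>xs. (a0 + (\<Sum>i<a. c i * xs ! i)) mod m)"
      by (rule P_groupE)
    show "h \<in> reduce_op m ` P_group k"
      using reduce_op_lin_op[OF assms, of a a0 c, symmetric] P_groupI[OF a] unfolding h
      by (rule image_eqI)
  qed
qed

lemma reduce_op_J:
  assumes k: "0 < k" and mk: "m dvd k" and C: "C \<in> J k"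
  shows "reduce_op m ` C \<in> J m"
proof -
  have m: "0 < m" "m \<le> k"
    using dvd_pos_nat[OF k mk] dvd_imp_le[OF mk k] .
  have "is_clone k C" "P_group k \<subseteq> C" "C \<subseteq> P_ring k"
    using C unfolding J_def by simp_all
  moreover have "\<forall>h\<in>C. preserves_mod k m h"
    using P_ring_preserves_mod[OF mk] \<open>C \<subseteq> P_ring k\<close> by blast
  ultimately show ?thesis
    unfolding J_def using reduce_op_image_is_clone[OF m] reduce_op_P_group[OF mk m(2)]
      reduce_op_P_ring[OF k mk] by blast
qed

lemma clone_lin_comb:
  assumes C: "is_clone k C" and lin: "P_group k \<subseteq> C" and f: "(a, f) \<in> C" and g: "(a, g) \<in> C"
  shows "mk_op k a (\<lambda>xs. (c * f xs + d * g xs) mod k) \<in> C"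
proof -
  have ops: "(a, f) \<in> all_ops k" "(a, g) \<in> all_ops k"
    using f g clone_subset_all_ops[OF C] by auto
  then have "0 < a" "mk_op k a f = (a, f)" "mk_op k a g = (a, g)"
    using all_ops_arity_pos[OF ops(1)] mk_op_fst_snd[OF ops(1)] mk_op_fst_snd[OF ops(2)] by simp_all
  then show ?thesis
    using clone_comp_mk_op[OF C subsetD[OF lin binary_lin_op_P_group[of k c d]], of "[f, g]" a]
      f g all_ops_less[OF ops(1)] all_ops_less[OF ops(2)] by simp
qed

lemma cong_crt_combination:
  fixes e1 e2 x1 x2 y :: nat
  assumes "coprime m n"
    and "[e1 = 1] (mod m)" "[e1 = 0] (mod n)" "[e2 = 0] (mod m)" "[e2 = 1] (mod n)"
    and "[x1 = y] (mod m)" "[x2 = y] (mod n)"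
  shows "[e1 * x1 + e2 * x2 = y] (mod m * n)"
proof (rule coprime_cong_mult_nat[OF _ _ assms(1)])
  show "[e1 * x1 + e2 * x2 = y] (mod m)"
    using cong_add[OF cong_mult[OF assms(2,6)] cong_mult[OF assms(4) cong_refl[of x2]]] by simp
  show "[e1 * x1 + e2 * x2 = y] (mod n)"
    using cong_add[OF cong_mult[OF assms(3) cong_refl[of x1]] cong_mult[OF assms(5,7)]] by simp
qed

lemma crt_idempotents:
  fixes m n :: nat
  assumes "coprime m n"
  obtains e1 e2 where "[e1 = 1] (mod m)" "[e1 = 0] (mod n)" "[e2 = 0] (mod m)" "[e2 = 1] (mod n)"
  using binary_chinese_remainder_nat[OF assms, of 1 0] binary_chinese_remainder_nat[OF assms, of 0 1]
  by blast

lemma reduce_op_lift: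
  assumes cop: "coprime m n" and m: "0 < m" and n: "0 < n" and g: "g \<in> P_ring m"
  shows "\<exists>h\<in>P_ring (m * n). reduce_op m h = g \<and> reduce_op n h = mk_op n (fst g) (\<lambda>_. 0)"
proof -
  let ?k = "m * n"
  have k: "0 < ?k" "m \<le> ?k" "n \<le> ?k"
    using m n by simp_all
  obtain e where e: "[e = 1] (mod m)" "[e = 0] (mod n)"
    using crt_idempotents[OF cop] by metis
  obtain a G where G: "(a, G) \<in> P_ring ?k" "reduce_op m (a, G) = g"
    using reduce_op_P_ring[OF k(1), of m] g by (metis dvd_triv_left image_iff prod.collapse)
  let ?h = "mk_op ?k a (\<lambda>xs. (e * G xs) mod ?k)"
  have "?h \<in> P_ring ?k"
    using clone_lin_comb[OF is_clone_P_ring P_group_subset_P_ring[OF k(1)] G(1) G(1), of e 0] by simp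
  moreover have "reduce_op m ?h = g"
  proof -
    have "(e * x) mod m = x mod m" for x
      using cong_mult[OF e(1) cong_refl[of x]] unfolding cong_def by simp
    then show ?thesis
      using G(2)[unfolded reduce_op_def] k(2) by (simp add: reduce_op_mk_op mod_mod_cancel)
  qed
  moreover have "reduce_op n ?h = mk_op n (fst g) (\<lambda>_. 0)"
  proof -
    have "(e * x) mod n = 0" for x
      using cong_mult[OF e(2) cong_refl[of x]] unfolding cong_def by simp
    then show ?thesis
      using G(2) k(3) by (auto simp: reduce_op_mk_op mod_mod_cancel)
  qed
  ultimately show ?thesis
    by blast
qed

lemma J_mem_of_reduce_op:
  assumes cop: "coprime m n" and m: "0 < m" and n: "0 < n" and C: "C \<in> J (m * n)"
    and h: "h \<in> P_ring (m * n)"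
    and hm: "reduce_op m h \<in> reduce_op m ` C" and hn: "reduce_op n h \<in> reduce_op n ` C"
  shows "h \<in> C"
proof -
  let ?k = "m * n"
  have k: "0 < ?k" "m \<le> ?k" "n \<le> ?k"
    using m n by simp_all
  have C': "is_clone ?k C" "P_group ?k \<subseteq> C" "C \<subseteq> P_ring ?k"
    using C unfolding J_def by simp_all
  obtain a f where af: "h = (a, f)"
    by (cases h)
  from hm obtain f1 where f1: "(a, f1) \<in> C" "reduce_op m (a, f1) = reduce_op m (a, f)"
    unfolding af by (metis pair_snd_reduce_op reduce_op_image_pairE)
  from hn obtain f2 where f2: "(a, f2) \<in> C" "reduce_op n (a, f2) = reduce_op n (a, f)"
    unfolding af by (metis pair_snd_reduce_op reduce_op_image_pairE)
  obtain e1 e2 where e: "[e1 = 1] (mod m)" "[e1 = 0] (mod n)" "[e2 = 0] (mod m)" "[e2 = 1] (mod n)"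
    using crt_idempotents[OF cop] .
  have "mk_op ?k a (\<lambda>xs. (e1 * f1 xs + e2 * f2 xs) mod ?k) \<in> C"
    using clone_lin_comb[OF C'(1,2) f1(1) f2(1)] .
  also have "mk_op ?k a (\<lambda>xs. (e1 * f1 xs + e2 * f2 xs) mod ?k) = mk_op ?k a f"
  proof (rule mk_op_cong)
    fix xs assume xs: "valid_args ?k a xs"
    have pres: "preserves_mod ?k d h'" if "d dvd ?k" "h' \<in> C \<union> {h}" for d h'
      using P_ring_preserves_mod[OF that(1)] that(2) C'(3) h by blast
    have "[f1 xs = f xs] (mod m)"
      using reduce_op_eq_imp_cong[OF m k(2) pres pres f1(2) xs] f1(1) af by simp
    moreover have "[f2 xs = f xs] (mod n)"
      using reduce_op_eq_imp_cong[OF n k(3) pres pres f2(2) xs] f2(1) af by simp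
    ultimately have "[e1 * f1 xs + e2 * f2 xs = f xs] (mod ?k)"
      using cong_crt_combination[OF cop e] by blast
    moreover have "f xs < ?k"
      using all_ops_less[OF _ xs] h clone_subset_all_ops[OF is_clone_P_ring] unfolding af by blast
    ultimately show "(e1 * f1 xs + e2 * f2 xs) mod ?k = f xs"
      unfolding cong_def by simp
  qed
  also have "mk_op ?k a f = h"
    using mk_op_fst_snd[of h ?k] h clone_subset_all_ops[OF is_clone_P_ring] unfolding af by auto
  finally show ?thesis .
qed

definition glue :: "nat \<Rightarrow> nat \<Rightarrow> operation set \<Rightarrow> operation set \<Rightarrow> operation set" where
  "glue m n C1 C2 = {h \<in> P_ring (m * n). reduce_op m h \<in> C1 \<and> reduce_op n h \<in> C2}"

lemma glue_commute: "glue m n C1 C2 = glue n m C2 C1"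
  unfolding glue_def by (auto simp: mult.commute)

lemma glue_J:
  assumes m: "0 < m" and n: "0 < n" and C1: "C1 \<in> J m" and C2: "C2 \<in> J n"
  shows "glue m n C1 C2 \<in> J (m * n)"
proof -
  let ?k = "m * n"
  have k: "0 < ?k" "m \<le> ?k" "n \<le> ?k" "m dvd ?k" "n dvd ?k"
    using m n by simp_all
  have pres: "\<forall>h\<in>P_ring ?k. preserves_mod ?k d h" if "d dvd ?k" for d
    using P_ring_preserves_mod that by blast
  have "glue m n C1 C2 = {h \<in> P_ring ?k. reduce_op m h \<in> C1} \<inter> {h \<in> P_ring ?k. reduce_op n h \<in> C2}"
    unfolding glue_def by blast
  moreover have "is_clone ?k \<dots>"
    using C1 C2 unfolding J_def
    by (intro clone_Int reduce_op_preimage_is_clone[OF m k(2) is_clone_P_ring pres[OF k(4)]]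
        reduce_op_preimage_is_clone[OF n k(3) is_clone_P_ring pres[OF k(5)]]) simp_all
  moreover have "P_group ?k \<subseteq> glue m n C1 C2"
    using P_group_subset_P_ring[OF k(1)] reduce_op_P_group[OF k(4,2)] reduce_op_P_group[OF k(5,3)] C1 C2
    unfolding glue_def J_def by blast
  moreover have "glue m n C1 C2 \<subseteq> P_ring ?k"
    unfolding glue_def by blast
  ultimately show ?thesis
    unfolding J_def by simp
qed

lemma reduce_op_glue:
  assumes cop: "coprime m n" and m: "0 < m" and n: "0 < n" and C1: "C1 \<in> J m" and C2: "C2 \<in> J n"
  shows "reduce_op m ` glue m n C1 C2 = C1"
proof
  show "reduce_op m ` glue m n C1 C2 \<subseteq> C1"
    unfolding glue_def by blast
  show "C1 \<subseteq> reduce_op m ` glue m n C1 C2"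
  proof
    fix g assume g: "g \<in> C1"
    then have "g \<in> P_ring m"
      using C1 unfolding J_def by blast
    then obtain h where h: "h \<in> P_ring (m * n)" "reduce_op m h = g" "reduce_op n h = mk_op n (fst g) (\<lambda>_. 0)"
      using reduce_op_lift[OF cop m n] by blast
    have "mk_op n (fst g) (\<lambda>_. 0) \<in> C2"
      using zero_op_P_group[OF all_ops_arity_pos] \<open>g \<in> P_ring m\<close> clone_subset_all_ops[OF is_clone_P_ring] C2
      unfolding J_def by blast
    then show "g \<in> reduce_op m ` glue m n C1 C2"
      using h g unfolding glue_def by force
  qed
qed

lemma glue_reduce_op:
  assumes cop: "coprime m n" and m: "0 < m" and n: "0 < n" and C: "C \<in> J (m * n)"
  shows "glue m n (reduce_op m ` C) (reduce_op n ` C) = C"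
  using J_mem_of_reduce_op[OF cop m n C] C unfolding glue_def J_def by blast

lemma all_ops_trivial_modulus:
  assumes k: "k \<le> 1" and h: "h \<in> all_ops k"
  shows "h = mk_op k (fst h) (\<lambda>xs. xs ! 0)"
proof -
  have "h = mk_op k (fst h) (snd h)"
    using mk_op_fst_snd[OF h] by simp
  also have "\<dots> = mk_op k (fst h) (\<lambda>xs. xs ! 0)"
  proof (rule mk_op_cong)
    fix xs assume xs: "valid_args k (fst h) xs"
    have "snd h xs < k"
      using all_ops_less[of "fst h" "snd h" k xs] h xs by simp
    moreover have "xs ! 0 < k"
      using valid_args_nth_less[OF xs all_ops_arity_pos[OF h]] .
    ultimately show "snd h xs = xs ! 0"
      using k by simp
  qed
  finally show ?thesis .
qed

lemma J_trivial_modulus: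
  assumes k: "k \<le> 1"
  shows "J k = {all_ops k}"
proof -
  have all_ops_least: "all_ops k \<subseteq> C" if "is_clone k C" for C
    using all_ops_trivial_modulus[OF k] clone_proj[OF that] all_ops_arity_pos by (metis subsetI)
  have "P_group k \<subseteq> all_ops k"
  proof
    fix h assume "h \<in> P_group k"
    then obtain a a0 c where a: "0 < a" and h: "h = mk_op k a (\<lambda>xs. (a0 + (\<Sum>i<a. c i * xs ! i)) mod k)"
      by (rule P_groupE)
    show "h \<in> all_ops k"
      unfolding h by (rule mk_op_in_all_ops[OF a]) (simp add: valid_args_modulus_pos[OF _ a])
  qed
  then show ?thesis
    using all_ops_least[OF is_clone_P_ring] all_ops_least clone_subset_all_ops is_clone_all_ops
    unfolding J_def by blast
qed

lemma reduce_op_pair_bij: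
  assumes cop: "coprime m n" and m: "0 < m" and n: "0 < n"
  shows "bij_betw (\<lambda>C. (reduce_op m ` C, reduce_op n ` C)) (J (m * n)) (J m \<times> J n)"
proof (rule bij_betw_byWitness[where f' = "\<lambda>(C1, C2). glue m n C1 C2"])
  show "\<forall>C\<in>J (m * n). (\<lambda>(C1, C2). glue m n C1 C2) (reduce_op m ` C, reduce_op n ` C) = C"
    using glue_reduce_op[OF cop m n] by simp
  show "\<forall>C'\<in>J m \<times> J n. (\<lambda>C. (reduce_op m ` C, reduce_op n ` C)) ((\<lambda>(C1, C2). glue m n C1 C2) C') = C'"
    using reduce_op_glue[OF cop m n] reduce_op_glue[OF coprime_commute[THEN iffD1, OF cop] n m]
    by (auto simp: glue_commute[of m n])
  show "(\<lambda>C. (reduce_op m ` C, reduce_op n ` C)) ` J (m * n) \<subseteq> J m \<times> J n"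
    using reduce_op_J[of "m * n" m] reduce_op_J[of "m * n" n] m n by auto
  show "(\<lambda>(C1, C2). glue m n C1 C2) ` (J m \<times> J n) \<subseteq> J (m * n)"
    using glue_J[OF m n] by auto
qed

lemma reduce_op_pair_subset_iff:
  assumes cop: "coprime m n" and m: "0 < m" and n: "0 < n"
    and C: "C \<in> J (m * n)" and D: "D \<in> J (m * n)"
  shows "C \<subseteq> D \<longleftrightarrow> reduce_op m ` C \<subseteq> reduce_op m ` D \<and> reduce_op n ` C \<subseteq> reduce_op n ` D"
proof
  assume "reduce_op m ` C \<subseteq> reduce_op m ` D \<and> reduce_op n ` C \<subseteq> reduce_op n ` D"
  then have "glue m n (reduce_op m ` C) (reduce_op n ` C) \<subseteq> glue m n (reduce_op m ` D) (reduce_op n ` D)"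
    unfolding glue_def by auto
  then show "C \<subseteq> D"
    using glue_reduce_op[OF cop m n C] glue_reduce_op[OF cop m n D] by simp
qed auto

theorem lemma1p1:
  fixes m n :: nat
  assumes "coprime m n"
  shows "\<exists>\<phi>. bij_betw \<phi> (J (m * n)) (J m \<times> J n) \<and>
           (\<forall>C\<in>J (m * n). \<forall>D\<in>J (m * n).
              C \<subseteq> D \<longleftrightarrow> (fst (\<phi> C) \<subseteq> fst (\<phi> D) \<and> snd (\<phi> C) \<subseteq> snd (\<phi> D)))"
proof (cases "m = 0 \<or> n = 0")
  case True
  with assms have "m \<le> 1" "n \<le> 1" "m * n \<le> 1"
    by auto
  then show ?thesis
    by (intro exI[of _ "\<lambda>_. (all_ops m, all_ops n)"]) (simp add: J_trivial_modulus bij_betw_def)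
next
  case False
  then have "0 < m" "0 < n"
    by simp_all
  then show ?thesis
    using reduce_op_pair_bij[OF assms] reduce_op_pair_subset_iff[OF assms]
    by (intro exI[of _ "\<lambda>C. (reduce_op m ` C, reduce_op n ` C)"]) simp
qed

end
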